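(* For $N\ge1$ and generic complex $\mathfrak t,\chi,u_1,\dots,u_N,v_1,\dots,v_N$, $$\frac{1}{\prod_{1\le i<j\le N}(u_i-u_j)}\det\Big[u_j^{N-i-1}\Big\{(u_j-\mathfrak t^{1-N})\prod_{l=1}^N\frac{1-\mathfrak tu_jv_l}{1-u_jv_l}+\mathfrak t^{1-i}(1-\chi u_j)\Big\}\Big]_{i,j=1}^N$$ $$=\frac{\prod_{i,j=1}^N(1-\mathfrak tu_iv_j)}{\prod_{1\le i<j\le N}(u_i-u_j)(v_i-v_j)}\det\left[\frac{(1-\mathfrak t^{-N}\chi)\mathfrak t(1-u_iv_j)+(1-\mathfrak t)(1-\mathfrak t^{1-N}v_j)}{(1-u_iv_j)(1-\mathfrak tu_iv_j)}\right]_{i,j=1}^N.$$ *)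

theory Defs
  imports Complex_Main "Jordan_Normal_Form.Determinant"
begin

(* Entries of the two matrices, with 1-based indices i (row) and j (column). *)
definition lhs_entry :: "nat \<Rightarrow> complex \<Rightarrow> complex \<Rightarrow> (nat \<Rightarrow> complex) \<Rightarrow> (nat \<Rightarrow> complex)
    \<Rightarrow> nat \<Rightarrow> nat \<Rightarrow> complex" where
  "lhs_entry N t \<chi> u v i j =
     u j powi (int N - int i - 1) *
     ((u j - t powi (1 - int N)) * (\<Prod>l=1..N. (1 - t * u j * v l) / (1 - u j * v l))
      + t powi (1 - int i) * (1 - \<chi> * u j))"

definition rhs_entry :: "nat \<Rightarrow> complex \<Rightarrow> complex \<Rightarrow> (nat \<Rightarrow> complex) \<Rightarrow> (nat \<Rightarrow> complex)
    \<Rightarrow> nat \<Rightarrow> nat \<Rightarrow> complex" where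
  "rhs_entry N t \<chi> u v i j =
     ((1 - t powi (- int N) * \<chi>) * t * (1 - u i * v j) + (1 - t) * (1 - t powi (1 - int N) * v j))
     / ((1 - u i * v j) * (1 - t * u i * v j))"

end

theory Submission
  imports Defs
begin

(* Multiply the transposed left-hand matrix by the matrix K whose j-th column holds the
   coefficients of prod_{l <> j} (x - v_l). Because the powers u^(N-1-k) run downwards, each entry
   of the product evaluates reversed polynomials, giving prod_{l <> j} (1 - u_i v_l) and
   prod_{l <> j} (1 - t u_i v_l); a rational identity then turns the (i,j) entry into
   prod_l (1 - t u_i v_l) times the (i,j) entry of the right-hand matrix. Finally det K is
   prod_{i<j} (v_i - v_j), since the Vandermonde matrix of the v's times K is the diagonal matrix
   with entries prod_{l <> i} (v_i - v_l). *)

lemma det_mat_scale_rows: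
  fixes c :: "nat \<Rightarrow> 'a::comm_ring_1"
  shows "det (mat n n (\<lambda>(i,j). c i * f i j)) = (\<Prod>i<n. c i) * det (mat n n (\<lambda>(i,j). f i j))"
proof -
  have "mat n n (\<lambda>(i,j). c i * f i j) = mat\<^sub>r n n (\<lambda>i. c i \<cdot>\<^sub>v vec n (f i))"
    and "mat n n (\<lambda>(i,j). f i j) = mat\<^sub>r n n (\<lambda>i. vec n (f i))"
    by (auto intro: eq_matI)
  then show ?thesis
    using det_rows_mul[of "\<lambda>i. vec n (f i)" n c] by (simp add: atLeast0LessThan)
qed

lemma det_vandermonde_reduce:
  fixes x :: "nat \<Rightarrow> 'a::comm_ring_1"
  shows "det (mat (Suc n) (Suc n) (\<lambda>(i,j). x i ^ j))
       = det (mat n n (\<lambda>(i,j). (x (Suc i) - x 0) * x (Suc i) ^ j))"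
proof -
  define A where "A = mat (Suc n) (Suc n) (\<lambda>(i,j). x i ^ j)"
  \<comment> \<open>subtract \<open>x 0\<close> times column \<open>j\<close> from column \<open>j + 1\<close>, for all \<open>j\<close> at once\<close>
  define U where "U = mat (Suc n) (Suc n)
    (\<lambda>(i,j). if i = j then 1 else if j = Suc i then - x 0 else (0::'a))"
  define B where "B = mat (Suc n) (Suc n)
    (\<lambda>(i,j). if j = 0 then 1 else x i ^ (j - 1) * (x i - x 0))"
  have "A * U = B"
  proof (rule eq_matI)
    fix i j assume i: "i < dim_row B" and j: "j < dim_col B"
    have "(A * U) $$ (i,j) = (\<Sum>k<Suc n. (if k = j then x i ^ k else 0)
                                         + (if Suc k = j then - x 0 * x i ^ k else 0))"
      using i j by (auto simp: A_def U_def B_def scalar_prod_def atLeast0LessThan intro!: sum.cong)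
    also have "\<dots> = B $$ (i,j)"
      using i j by (cases j) (auto simp: sum.distrib B_def algebra_simps less_Suc_eq)
    finally show "(A * U) $$ (i,j) = B $$ (i,j)" .
  qed (auto simp: A_def U_def B_def)
  moreover have "det U = 1"
  proof -
    have "diag_mat U = replicate (Suc n) 1"
      by (rule nth_equalityI) (simp_all add: diag_mat_def U_def nth_Cons' del: upt_Suc)
    then show ?thesis
      by (subst det_upper_triangular[of _ "Suc n"]) (auto simp: upper_triangular_def U_def)
  qed
  ultimately have "det A = det B"
    using det_mult[of A "Suc n" U] by (simp add: A_def U_def)
  also have "\<dots> = (\<Sum>j<Suc n. B $$ (0,j) * cofactor B 0 j)"
    by (rule laplace_expansion_row) (auto simp: B_def)
  also have "\<dots> = cofactor B 0 0"
    by (subst sum.lessThan_Suc_shift) (simp add: B_def)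
  also have "\<dots> = det (mat n n (\<lambda>(i,j). (x (Suc i) - x 0) * x (Suc i) ^ j))"
    unfolding cofactor_def mat_delete_def
    by (simp, rule arg_cong[where f=det], rule eq_matI) (auto simp: B_def mult.commute)
  finally show ?thesis by (simp add: A_def)
qed

lemma det_vandermonde:
  fixes x :: "nat \<Rightarrow> 'a::comm_ring_1"
  shows "det (mat n n (\<lambda>(i,j). x i ^ j)) = (\<Prod>i<n. \<Prod>j\<in>{i<..<n}. (x j - x i))"
proof (induction n arbitrary: x)
  case 0
  then show ?case by simp
next
  case (Suc n)
  have shift: "{i<..<m} = {Suc i..<m}" for i m :: nat by auto
  have "det (mat (Suc n) (Suc n) (\<lambda>(i,j). x i ^ j))
      = (\<Prod>i<n. (x (Suc i) - x 0)) * (\<Prod>i<n. \<Prod>j\<in>{i<..<n}. (x (Suc j) - x (Suc i)))"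
    unfolding det_vandermonde_reduce det_mat_scale_rows Suc.IH ..
  also have "\<dots> = (\<Prod>i<Suc n. \<Prod>j\<in>{i<..<Suc n}. (x j - x i))"
    unfolding prod.lessThan_Suc_shift shift prod.shift_bounds_Suc_ivl atLeast0LessThan ..
  finally show ?case .
qed

lemma prod_offdiag_split:
  fixes f :: "nat \<Rightarrow> nat \<Rightarrow> 'a::comm_monoid_mult"
  shows "(\<Prod>i<n. \<Prod>l\<in>{..<n}-{i}. f i l)
       = (\<Prod>i<n. \<Prod>j\<in>{i<..<n}. f j i) * (\<Prod>i<n. \<Prod>j\<in>{i<..<n}. f i j)"
proof -
  have "(\<Prod>i<n. \<Prod>l\<in>{..<n}-{i}. f i l)
      = (\<Prod>i<n. (\<Prod>l\<in>{l\<in>{..<n}. l < i}. f i l) * (\<Prod>j\<in>{i<..<n}. f i j))"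
  proof (rule prod.cong[OF refl])
    fix i assume "i \<in> {..<n}"
    then have "{..<n}-{i} = {l\<in>{..<n}. l < i} \<union> {i<..<n}" by auto
    then show "(\<Prod>l\<in>{..<n}-{i}. f i l) = (\<Prod>l\<in>{l\<in>{..<n}. l < i}. f i l) * (\<Prod>j\<in>{i<..<n}. f i j)"
      by (simp add: prod.union_disjoint disjoint_iff)
  qed
  also have "\<dots> = (\<Prod>l<n. \<Prod>i\<in>{i\<in>{..<n}. l < i}. f i l) * (\<Prod>i<n. \<Prod>j\<in>{i<..<n}. f i j)"
    unfolding prod.distrib
    by (rule arg_cong[where f="\<lambda>a. a * _"], rule prod.swap_restrict) simp_all
  also have "(\<Prod>l<n. \<Prod>i\<in>{i\<in>{..<n}. l < i}. f i l) = (\<Prod>i<n. \<Prod>j\<in>{i<..<n}. f j i)"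
    by (rule prod.cong[OF refl], rule prod.cong) auto
  finally show ?thesis .
qed

lemma poly_eq_sum_coeff_lessThan:
  fixes p :: "'a::comm_semiring_1 poly"
  assumes "degree p < n"
  shows "poly p z = (\<Sum>k<n. coeff p k * z ^ k)"
proof -
  have "(\<Sum>k\<le>degree p. coeff p k * z ^ k) = (\<Sum>k<n. coeff p k * z ^ k)"
    by (rule sum.mono_neutral_left) (use assms in \<open>auto simp: coeff_eq_0\<close>)
  then show ?thesis by (simp add: poly_altdef)
qed

lemma degree_prod_linear_le:
  fixes x :: "nat \<Rightarrow> 'a::comm_ring_1"
  assumes "finite S"
  shows "degree (\<Prod>l\<in>S. [:- x l, 1:]) \<le> card S"
proof -
  have "degree (\<Prod>l\<in>S. [:- x l, 1:]) \<le> (\<Sum>l\<in>S. degree [:- x l, 1:])"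
    using degree_prod_sum_le[OF assms, of "\<lambda>l. [:- x l, 1:]"] by simp
  also have "\<dots> \<le> card S" by (simp add: sum_mono[of S _ "\<lambda>_. 1", simplified])
  finally show ?thesis .
qed

\<comment> \<open>Pairing coefficients with descending powers evaluates the reversed polynomial.\<close>
lemma sum_coeff_prod_linear_powi:
  fixes x :: "nat \<Rightarrow> 'a::field"
  assumes "finite S" "card S < n" "z \<noteq> 0"
  shows "(\<Sum>k<n. coeff (\<Prod>l\<in>S. [:- x l, 1:]) k * z powi (m - int k))
       = z powi (m - int (card S)) * (\<Prod>l\<in>S. (1 - z * x l))"
proof -
  let ?F = "\<Prod>l\<in>S. [:- x l, 1:]"
  have deg: "degree ?F < n"
    using degree_prod_linear_le[OF assms(1)] assms(2) by (rule le_less_trans)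
  have "z powi (m - int k) = z powi m * inverse z ^ k" for k
    using assms(3) by (simp add: power_int_diff power_inverse divide_inverse)
  then have "(\<Sum>k<n. coeff ?F k * z powi (m - int k)) = z powi m * poly ?F (inverse z)"
    by (simp add: poly_eq_sum_coeff_lessThan[OF deg] sum_distrib_left algebra_simps)
  also have "poly ?F (inverse z) = (\<Prod>l\<in>S. inverse z * (1 - z * x l))"
    using assms(3) by (auto simp: poly_prod right_diff_distrib intro!: prod.cong)
  also have "\<dots> = inverse z ^ card S * (\<Prod>l\<in>S. (1 - z * x l))"
    by (simp add: prod.distrib)
  also have "z powi m * (inverse z ^ card S * (\<Prod>l\<in>S. (1 - z * x l)))
      = z powi (m - int (card S)) * (\<Prod>l\<in>S. (1 - z * x l))"
    using assms(3) by (simp add: power_int_diff power_inverse divide_inverse)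
  finally show ?thesis .
qed

\<comment> \<open>The Vandermonde matrix times this coefficient matrix is diagonal.\<close>
lemma det_coeff_mat_prod_linear:
  fixes x :: "nat \<Rightarrow> 'a::idom"
  assumes inj: "inj_on x {..<n}"
  shows "det (mat n n (\<lambda>(k,j). coeff (\<Prod>l\<in>{..<n}-{j}. [:- x l, 1:]) k))
       = (\<Prod>i<n. \<Prod>j\<in>{i<..<n}. (x i - x j))"
proof -
  define K where "K = mat n n (\<lambda>(k,j). coeff (\<Prod>l\<in>{..<n}-{j}. [:- x l, 1:]) k)"
  define V where "V = mat n n (\<lambda>(i,k). x i ^ k)"
  define D where "D = mat n n (\<lambda>(i,j). if i = j then (\<Prod>l\<in>{..<n}-{i}. (x i - x l)) else 0)"
  have "V * K = D"
  proof (rule eq_matI)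
    fix i j assume i: "i < dim_row D" and j: "j < dim_col D"
    have deg: "degree (\<Prod>l\<in>{..<n}-{j}. [:- x l, 1:]) < n"
      using degree_prod_linear_le[of "{..<n}-{j}" x] j by (auto simp: D_def)
    have "(V * K) $$ (i,j) = poly (\<Prod>l\<in>{..<n}-{j}. [:- x l, 1:]) (x i)"
      using i j by (simp add: V_def K_def D_def scalar_prod_def poly_eq_sum_coeff_lessThan[OF deg]
          atLeast0LessThan mult.commute)
    also have "\<dots> = D $$ (i,j)"
      using i j by (auto simp: D_def poly_prod)
    finally show "(V * K) $$ (i,j) = D $$ (i,j)" .
  qed (auto simp: V_def K_def D_def)
  then have "det V * det K = det D"
    using det_mult[of V n K] by (simp add: V_def K_def)
  also have "det D = (\<Prod>i<n. \<Prod>l\<in>{..<n}-{i}. (x i - x l))"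
    by (subst det_upper_triangular[of _ n])
       (auto simp: upper_triangular_def D_def diag_mat_def prod.list_conv_set_nth atLeast0LessThan)
  also have "\<dots> = det V * (\<Prod>i<n. \<Prod>j\<in>{i<..<n}. (x i - x j))"
    unfolding prod_offdiag_split V_def det_vandermonde ..
  finally have "det V * det K = det V * (\<Prod>i<n. \<Prod>j\<in>{i<..<n}. (x i - x j))" .
  moreover have "det V \<noteq> 0"
    using inj unfolding V_def det_vandermonde by (auto dest: inj_onD)
  ultimately show ?thesis by (simp add: K_def)
qed

lemma lhs_rhs_scalar_identity:
  fixes w t \<chi> r b T E :: complex
  assumes "w \<noteq> 0" "E \<noteq> 0" "1 - w * b \<noteq> 0" "1 - t * w * b \<noteq> 0"
  shows "(w - r * t) * ((1 - t * w * b) / (1 - w * b) * (T / E)) * (inverse w * E)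
           + r * t * (1 - \<chi> * w) * (inverse w * T)
       = (1 - t * w * b) * T * (((1 - r * \<chi>) * t * (1 - w * b) + (1 - t) * (1 - r * t * b))
           / ((1 - w * b) * (1 - t * w * b)))"
proof -
  have key: "(w - r * t) * (1 - t * w * b) + r * t * (1 - \<chi> * w) * (1 - w * b)
      = w * ((1 - r * \<chi>) * t * (1 - w * b) + (1 - t) * (1 - r * t * b))"
    by (simp add: algebra_simps)
  have "(w - r * t) * ((1 - t * w * b) / (1 - w * b) * (T / E)) * (inverse w * E)
           + r * t * (1 - \<chi> * w) * (inverse w * T)
      = T / (w * (1 - w * b)) * ((w - r * t) * (1 - t * w * b) + r * t * (1 - \<chi> * w) * (1 - w * b))"
    using assms by (simp add: divide_simps) (simp add: algebra_simps)
  also have "\<dots> = (1 - t * w * b) * T * (((1 - r * \<chi>) * t * (1 - w * b) + (1 - t) * (1 - r * t * b))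
           / ((1 - w * b) * (1 - t * w * b)))"
    unfolding key using assms by (simp add: divide_simps)
  finally show ?thesis .
qed

lemma lhs_entry_Suc_eq:
  fixes N :: nat and t \<chi> :: complex and u v :: "nat \<Rightarrow> complex"
  assumes "t \<noteq> 0"
  defines "r \<equiv> t powi (- int N)"
  shows "lhs_entry N t \<chi> u v (k+1) i
       = (u i - r * t) * (\<Prod>l=1..N. (1 - t * u i * v l) / (1 - u i * v l)) * u i powi (int N - 2 - int k)
         + r * t * t * (1 - \<chi> * u i) * (t * u i) powi (int N - 2 - int k)"
proof -
  have "t powi (1 - int N) = r * t"
    using power_int_add[of t "- int N" 1] assms by simp
  moreover have "t powi (1 - int (k+1)) = r * t * t * t powi (int N - 2 - int k)"
    using power_int_add[of t "- int N" 2] power_int_add[of t "- int N + 2" "int N - 2 - int k"] assms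
    by (simp add: power2_eq_square)
  ultimately show ?thesis
    by (simp add: lhs_entry_def power_int_mult_distrib algebra_simps)
qed

lemma sum_lhs_entry_coeff:
  fixes t \<chi> :: complex and u v :: "nat \<Rightarrow> complex"
  assumes N: "N \<ge> 1" and t: "t \<noteq> 0" and w: "u i \<noteq> 0" and a: "a \<in> {1..N}"
    and nz: "\<forall>l\<in>{1..N}. u i * v l \<noteq> 1 \<and> t * u i * v l \<noteq> 1"
  shows "(\<Sum>k<N. lhs_entry N t \<chi> u v (k+1) i * coeff (\<Prod>l\<in>{1..N}-{a}. [:- v l, 1:]) k)
       = (\<Prod>l=1..N. (1 - t * u i * v l)) * rhs_entry N t \<chi> u v i a"
proof -
  define S where "S = {1..N} - {a}"
  define F where "F = (\<Prod>l\<in>S. [:- v l, 1:])"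
  define P where "P = (\<Prod>l=1..N. (1 - t * u i * v l) / (1 - u i * v l))"
  define T where "T = (\<Prod>l\<in>S. (1 - t * u i * v l))"
  define E where "E = (\<Prod>l\<in>S. (1 - u i * v l))"
  define r where "r = t powi (- int N)"
  have S: "finite S" "card S < N" "int N - 2 - int (card S) = - 1"
    using a N by (auto simp: S_def of_nat_diff)
  have tw: "t * u i \<noteq> 0" using t w by simp
  have "(\<Sum>k<N. lhs_entry N t \<chi> u v (k+1) i * coeff F k)
      = (\<Sum>k<N. (u i - r * t) * P * (coeff F k * u i powi (int N - 2 - int k))
        + r * t * t * (1 - \<chi> * u i) * (coeff F k * (t * u i) powi (int N - 2 - int k)))"
    unfolding lhs_entry_Suc_eq[OF t] r_def P_def by (simp add: algebra_simps)
  also have "\<dots> = (u i - r * t) * P * (\<Sum>k<N. coeff F k * u i powi (int N - 2 - int k))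
        + r * t * t * (1 - \<chi> * u i) * (\<Sum>k<N. coeff F k * (t * u i) powi (int N - 2 - int k))"
    by (simp add: sum.distrib sum_distrib_left)
  also have "\<dots> = (u i - r * t) * P * (inverse (u i) * E)
        + r * t * (1 - \<chi> * u i) * (inverse (u i) * T)"
    using sum_coeff_prod_linear_powi[OF S(1,2) w, of v "int N - 2"]
      sum_coeff_prod_linear_powi[OF S(1,2) tw, of v "int N - 2"] t w
    by (simp add: S(3) F_def E_def T_def mult.assoc)
  also have "\<dots> = (\<Prod>l=1..N. (1 - t * u i * v l)) * rhs_entry N t \<chi> u v i a"
  proof -
    have split: "(\<Prod>l=1..N. g l) = g a * (\<Prod>l\<in>S. g l)" for g :: "nat \<Rightarrow> complex"
      using a by (simp add: S_def prod.remove)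
    have "E \<noteq> 0" "1 - u i * v a \<noteq> 0" "1 - t * u i * v a \<noteq> 0"
      using nz a by (auto simp: E_def S_def)
    moreover have "P = (1 - t * u i * v a) / (1 - u i * v a) * (T / E)"
      unfolding P_def prod_dividef split T_def E_def by simp
    moreover have "t powi (1 - int N) = r * t"
      using power_int_add[of t "- int N" 1] t by (simp add: r_def)
    ultimately show ?thesis
      unfolding split[of "\<lambda>l. 1 - t * u i * v l"] rhs_entry_def r_def[symmetric] T_def[symmetric]
      using lhs_rhs_scalar_identity[OF w] by simp
  qed
  finally show ?thesis by (simp add: F_def S_def)
qed

lemma prod_upper_pairs_shift:
  "(\<Prod>i<n. \<Prod>j\<in>{i<..<n}. f (Suc i) (Suc j)) = (\<Prod>i=1..n. \<Prod>j\<in>{i<..n}. f i j)"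
proof -
  have "{Suc i<..n} = Suc ` {i<..<n}" for i
  proof -
    have "{i<..<n} = {Suc i..<n}" by auto
    then show ?thesis by auto
  qed
  then show ?thesis
    by (simp add: prod.atLeast1_atMost_eq prod.reindex)
qed

lemma det_coeff_mat_prod_linear_from_1:
  fixes v :: "nat \<Rightarrow> 'a::idom"
  assumes "inj_on v {1..N}"
  shows "det (mat N N (\<lambda>(k,j). coeff (\<Prod>l\<in>{1..N}-{j+1}. [:- v l, 1:]) k))
       = (\<Prod>i=1..N. \<Prod>j\<in>{i<..N}. (v i - v j))"
proof -
  have reindex: "(\<Prod>l\<in>{1..N}-{j+1}. [:- v l, 1:]) = (\<Prod>l\<in>{..<N}-{j}. [:- v (Suc l), 1:])" for j
  proof -
    have "{1..N}-{j+1} = Suc ` ({..<N}-{j})"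
      by (simp add: image_set_diff image_Suc_lessThan)
    then show ?thesis by (simp add: prod.reindex)
  qed
  have "inj_on (\<lambda>i. v (Suc i)) {..<N}"
    by (intro inj_onI) (auto dest: inj_onD[OF assms])
  then have "det (mat N N (\<lambda>(k,j). coeff (\<Prod>l\<in>{..<N}-{j}. [:- v (Suc l), 1:]) k))
      = (\<Prod>i<N. \<Prod>j\<in>{i<..<N}. (v (Suc i) - v (Suc j)))"
    by (rule det_coeff_mat_prod_linear)
  then show ?thesis
    unfolding reindex prod_upper_pairs_shift[where f = "\<lambda>i j. v i - v j"] .
qed

lemma det_lhs_mat_mult_det_coeff_mat:
  fixes t \<chi> :: complex and u v :: "nat \<Rightarrow> complex"
  assumes N: "N \<ge> 1" and t: "t \<noteq> 0" and u: "\<forall>i\<in>{1..N}. u i \<noteq> 0"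
    and nz: "\<forall>i\<in>{1..N}. \<forall>j\<in>{1..N}. u i * v j \<noteq> 1 \<and> t * u i * v j \<noteq> 1"
  shows "det (mat N N (\<lambda>(i, j). lhs_entry N t \<chi> u v (i + 1) (j + 1)))
           * det (mat N N (\<lambda>(k, j). coeff (\<Prod>l\<in>{1..N}-{j+1}. [:- v l, 1:]) k))
       = (\<Prod>i=1..N. \<Prod>j=1..N. (1 - t * u i * v j))
           * det (mat N N (\<lambda>(i, j). rhs_entry N t \<chi> u v (i + 1) (j + 1)))"
proof -
  define L where "L = mat N N (\<lambda>(i, j). lhs_entry N t \<chi> u v (i + 1) (j + 1))"
  define K where "K = mat N N (\<lambda>(k, j). coeff (\<Prod>l\<in>{1..N}-{j+1}. [:- v l, 1:]) k)"
  define P where "P = mat N N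
    (\<lambda>(i, j). (\<Prod>l=1..N. (1 - t * u (i+1) * v l)) * rhs_entry N t \<chi> u v (i+1) (j+1))"
  have "transpose_mat L * K = P"
  proof (rule eq_matI)
    fix i j assume "i < dim_row P" "j < dim_col P"
    then have ij: "i < N" "j < N" by (simp_all add: P_def)
    then have "(transpose_mat L * K) $$ (i, j)
        = (\<Sum>k<N. lhs_entry N t \<chi> u v (k+1) (i+1) * coeff (\<Prod>l\<in>{1..N}-{j+1}. [:- v l, 1:]) k)"
      by (simp add: L_def K_def scalar_prod_def atLeast0LessThan)
    also have "\<dots> = P $$ (i, j)"
    proof -
      have "u (i+1) \<noteq> 0" "j+1 \<in> {1..N}" "\<forall>l\<in>{1..N}. u (i+1) * v l \<noteq> 1 \<and> t * u (i+1) * v l \<noteq> 1"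
        using ij u nz by auto
      from sum_lhs_entry_coeff[where u = u and i = "i+1", OF N t this] show ?thesis
        using ij by (simp add: P_def)
    qed
    finally show "(transpose_mat L * K) $$ (i, j) = P $$ (i, j)" .
  qed (simp_all add: L_def K_def P_def)
  then show ?thesis
    using det_mult[of "transpose_mat L" N K] det_transpose[of L N]
    by (simp add: L_def K_def P_def det_mat_scale_rows prod.atLeast1_atMost_eq)
qed

theorem mainTheorem6:
  fixes N :: nat and t \<chi> :: complex and u v :: "nat \<Rightarrow> complex"
  assumes "N \<ge> 1"
    and "t \<noteq> 0"
    and "\<forall>i\<in>{1..N}. u i \<noteq> 0"
    and "\<forall>i\<in>{1..N}. \<forall>j\<in>{1..N}. i \<noteq> j \<longrightarrow> u i \<noteq> u j"
    and "\<forall>i\<in>{1..N}. \<forall>j\<in>{1..N}. i \<noteq> j \<longrightarrow> v i \<noteq> v j"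
    and "\<forall>i\<in>{1..N}. \<forall>j\<in>{1..N}. u i * v j \<noteq> 1 \<and> t * u i * v j \<noteq> 1"
  shows "(1 / (\<Prod>i=1..N. \<Prod>j\<in>{i<..N}. (u i - u j)))
           * det (mat N N (\<lambda>(i, j). lhs_entry N t \<chi> u v (i + 1) (j + 1)))
       = (\<Prod>i=1..N. \<Prod>j=1..N. (1 - t * u i * v j))
           / (\<Prod>i=1..N. \<Prod>j\<in>{i<..N}. (u i - u j) * (v i - v j))
           * det (mat N N (\<lambda>(i, j). rhs_entry N t \<chi> u v (i + 1) (j + 1)))"
proof -
  define Du where "Du = (\<Prod>i=1..N. \<Prod>j\<in>{i<..N}. (u i - u j))"
  define Dv where "Dv = (\<Prod>i=1..N. \<Prod>j\<in>{i<..N}. (v i - v j))"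
  have "det (mat N N (\<lambda>(k, j). coeff (\<Prod>l\<in>{1..N}-{j+1}. [:- v l, 1:]) k)) = Dv"
    unfolding Dv_def using assms(5) by (intro det_coeff_mat_prod_linear_from_1 inj_onI) blast
  then have "det (mat N N (\<lambda>(i, j). lhs_entry N t \<chi> u v (i + 1) (j + 1))) * Dv
      = (\<Prod>i=1..N. \<Prod>j=1..N. (1 - t * u i * v j))
          * det (mat N N (\<lambda>(i, j). rhs_entry N t \<chi> u v (i + 1) (j + 1)))"
    using det_lhs_mat_mult_det_coeff_mat[OF assms(1-3,6)] by simp
  moreover have "Du \<noteq> 0" "Dv \<noteq> 0"
    unfolding Du_def Dv_def using assms(4,5) by fastforce+
  moreover have "(\<Prod>i=1..N. \<Prod>j\<in>{i<..N}. (u i - u j) * (v i - v j)) = Du * Dv"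
    unfolding Du_def Dv_def by (simp add: prod.distrib)
  ultimately show ?thesis
    unfolding Du_def[symmetric] by (simp add: field_simps)
qed

end
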